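(* Let $T$ be a locally finite rooted tree with root $r$, all of whose edges are directed towards $r$, and let $B$ and $R$ be disjoint sets of leaves of $T$. Then there exists a strong blue blockage or there exists a red blockage (for $(T,B,R)$).
   Context: Edges of $T$ are ordered pairs $st$ pointing from $s$ to $t$, oriented towards the root $r$ (so every vertex other than $r$ has exactly one outgoing edge). A \emph{leaf} is a vertex with no incoming edges. Elements of $B$ are called blue, elements of $R$ red. For an edge set $X$, $V(X)$ denotes the set of vertices incident with an edge of $X$. For an edge set $X$ and vertex $v$, the \emph{accumulation} $A(v,X)$ is the number of edges of $X$ pointing to $v$ minus the number of edges of $X$ pointing away from $v$; for edge sets $X,Y$, $A(v,X,Y)=A(v,X)-A(v,Y)$. An edge set is \emph{rayless} if the subgraph it forms contains no ray. The \emph{blue flow} $b(X)$ to $X$ is the union of the edge sets of those (directed) paths starting at a blue leaf all of whose interior vertices are not incident with an edge of $X$; the \emph{red flow} $r(X)$ is defined in the same way with red leaves in place of blue leaves. A \emph{red blockage} is a rayless edge set $X$ such that $V(X)\cap B=\emptyset$ and $A(v,X,b(X))\ge 0$ for every $v\in (V(X)\cup\{r\})\setminus R$. A \emph{blue blockage} is a rayless edge set $X$ such that $V(X)\cap R=\emptyset$ and $A(v,X,r(X))\ge 0$ for every $v\in (V(X)\cup\{r\})\setminus B$; it is \emph{strong} if $A(r,X,r(X))\ge 1$. *)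

theory Defs
  imports Main
begin

text \<open>A rooted tree is given by its vertex set V, its root r and a parent map par:
  every vertex s other than r has exactly one outgoing edge (s, par s), pointing towards r.\<close>

definition rooted_tree :: "'a set \<Rightarrow> 'a \<Rightarrow> ('a \<Rightarrow> 'a) \<Rightarrow> bool" where
  "rooted_tree V r par \<longleftrightarrow> r \<in> V \<and> (\<forall>v\<in>V - {r}. par v \<in> V)
     \<and> (\<forall>v\<in>V. \<exists>n. (par ^^ n) v = r)"

definition tedges :: "'a set \<Rightarrow> 'a \<Rightarrow> ('a \<Rightarrow> 'a) \<Rightarrow> ('a \<times> 'a) set" where
  "tedges V r par = {(s, par s) | s. s \<in> V \<and> s \<noteq> r}"

definition locally_finite_tree :: "'a set \<Rightarrow> 'a \<Rightarrow> ('a \<Rightarrow> 'a) \<Rightarrow> bool" where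
  "locally_finite_tree V r par \<longleftrightarrow> (\<forall>v\<in>V. finite {s. (s, v) \<in> tedges V r par})"

definition leaves :: "'a set \<Rightarrow> 'a \<Rightarrow> ('a \<Rightarrow> 'a) \<Rightarrow> 'a set" where
  "leaves V r par = {v \<in> V. \<not> (\<exists>s. (s, v) \<in> tedges V r par)}"

definition verts :: "('a \<times> 'a) set \<Rightarrow> 'a set" where
  "verts X = fst ` X \<union> snd ` X"

definition accum :: "'a \<Rightarrow> ('a \<times> 'a) set \<Rightarrow> int" where
  "accum v X = int (card {e \<in> X. snd e = v}) - int (card {e \<in> X. fst e = v})"

definition accum2 :: "'a \<Rightarrow> ('a \<times> 'a) set \<Rightarrow> ('a \<times> 'a) set \<Rightarrow> int" where
  "accum2 v X Y = accum v X - accum v Y"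

definition rayless :: "('a \<times> 'a) set \<Rightarrow> bool" where
  "rayless X \<longleftrightarrow> \<not> (\<exists>f :: nat \<Rightarrow> 'a. inj f \<and>
      (\<forall>i. (f i, f (Suc i)) \<in> X \<or> (f (Suc i), f i) \<in> X))"

definition dpath :: "('a \<times> 'a) set \<Rightarrow> 'a list \<Rightarrow> bool" where
  "dpath E vs \<longleftrightarrow> vs \<noteq> [] \<and> distinct vs \<and> (\<forall>i. Suc i < length vs \<longrightarrow> (vs ! i, vs ! Suc i) \<in> E)"

definition path_edges :: "'a list \<Rightarrow> ('a \<times> 'a) set" where
  "path_edges vs = {(vs ! i, vs ! Suc i) | i. Suc i < length vs}"

definition flow :: "'a set \<Rightarrow> 'a \<Rightarrow> ('a \<Rightarrow> 'a) \<Rightarrow> 'a set \<Rightarrow> ('a \<times> 'a) set \<Rightarrow> ('a \<times> 'a) set" where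
  "flow V r par S X = \<Union> {path_edges vs | vs. dpath (tedges V r par) vs
      \<and> hd vs \<in> S \<and> hd vs \<in> leaves V r par
      \<and> (\<forall>i. 0 < i \<and> Suc i < length vs \<longrightarrow> vs ! i \<notin> verts X)}"

definition red_blockage :: "'a set \<Rightarrow> 'a \<Rightarrow> ('a \<Rightarrow> 'a) \<Rightarrow> 'a set \<Rightarrow> 'a set \<Rightarrow> ('a \<times> 'a) set \<Rightarrow> bool" where
  "red_blockage V r par B R X \<longleftrightarrow> X \<subseteq> tedges V r par \<and> rayless X \<and> verts X \<inter> B = {}
     \<and> (\<forall>v \<in> (verts X \<union> {r}) - R. accum2 v X (flow V r par B X) \<ge> 0)"

definition blue_blockage :: "'a set \<Rightarrow> 'a \<Rightarrow> ('a \<Rightarrow> 'a) \<Rightarrow> 'a set \<Rightarrow> 'a set \<Rightarrow> ('a \<times> 'a) set \<Rightarrow> bool" where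
  "blue_blockage V r par B R X \<longleftrightarrow> X \<subseteq> tedges V r par \<and> rayless X \<and> verts X \<inter> R = {}
     \<and> (\<forall>v \<in> (verts X \<union> {r}) - B. accum2 v X (flow V r par R X) \<ge> 0)"

definition strong_blue_blockage :: "'a set \<Rightarrow> 'a \<Rightarrow> ('a \<Rightarrow> 'a) \<Rightarrow> 'a set \<Rightarrow> 'a set \<Rightarrow> ('a \<times> 'a) set \<Rightarrow> bool" where
  "strong_blue_blockage V r par B R X \<longleftrightarrow> blue_blockage V r par B R X
     \<and> accum2 r X (flow V r par R X) \<ge> 1"

end

theory Submission
  imports Defs
begin

text \<open>Play a majority game on the tree: a vertex is won by blue if it is a blue leaf or strictly
  more of its children are won by blue than lie in a given red set, and symmetrically for red.
  Local finiteness makes the won set the union of \<omega> rounds, and a least fixed point of the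
  two-step iteration yields disjoint sets P (won by blue) and N (won by red) such that every other
  vertex has as many children in P as in N. If the root lies in P, the edges leaving P and not
  entering N, where an edge inside P must increase the round in which its ends are won, form a
  strong blue blockage: each vertex outside N receives at least as many of these edges as red flow,
  since red flow can only climb through N, and the rounds forbid rays. Otherwise the symmetric
  construction for red gives a red blockage.\<close>

lemma card_in_edges: "card {e \<in> X. snd e = v} = card {c. (c, v) \<in> X}"
proof -
  have "{e \<in> X. snd e = v} = (\<lambda>c. (c, v)) ` {c. (c, v) \<in> X}" by force
  thus ?thesis by (simp add: card_image inj_on_def)
qed

locale locally_finite_rooted_tree =
  fixes V :: "'a set" and r :: 'a and par :: "'a \<Rightarrow> 'a"
  assumes rooted: "rooted_tree V r par" and locally_finite: "locally_finite_tree V r par"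
begin

definition children :: "'a \<Rightarrow> 'a set" where
  "children v = {s. (s, v) \<in> tedges V r par}"

lemma tedges_iff: "(s, v) \<in> tedges V r par \<longleftrightarrow> s \<in> V \<and> s \<noteq> r \<and> v = par s"
  by (auto simp: tedges_def)

lemma children_iff: "s \<in> children v \<longleftrightarrow> s \<in> V \<and> s \<noteq> r \<and> v = par s"
  by (simp add: children_def tedges_iff)

lemma finite_children: "v \<in> V \<Longrightarrow> finite (children v)"
  using locally_finite by (simp add: locally_finite_tree_def children_def)

lemma root_in_V: "r \<in> V"
  using rooted by (simp add: rooted_tree_def)

lemma par_in_V: "s \<in> V \<Longrightarrow> s \<noteq> r \<Longrightarrow> par s \<in> V"
  using rooted by (simp add: rooted_tree_def)

lemma reaches_root: "v \<in> V \<Longrightarrow> \<exists>n. (par ^^ n) v = r"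
  using rooted by (simp add: rooted_tree_def)

lemma children_leaf: "v \<in> leaves V r par \<Longrightarrow> children v = {}"
  by (auto simp: leaves_def children_def)

lemma verts_subset_V: "X \<subseteq> tedges V r par \<Longrightarrow> verts X \<subseteq> V"
  by (auto simp: verts_def tedges_iff par_in_V)

lemma card_out_edges_le_1:
  assumes "X \<subseteq> tedges V r par"
  shows "card {e \<in> X. fst e = v} \<le> 1"
proof -
  from assms have "{e \<in> X. fst e = v} \<subseteq> {(v, par v)}" by (auto simp: tedges_def)
  from card_mono[OF _ this] show ?thesis by simp
qed

inductive reachable_avoiding :: "'a set \<Rightarrow> 'a set \<Rightarrow> 'a \<Rightarrow> bool" for S W where
  source: "d \<in> S \<Longrightarrow> reachable_avoiding S W d"
| climb: "reachable_avoiding S W e \<Longrightarrow> e \<in> V \<Longrightarrow> e \<noteq> r \<Longrightarrow> par e \<notin> W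
    \<Longrightarrow> reachable_avoiding S W (par e)"

lemma flow_subset_reachable:
  "flow V r par S X \<subseteq> {e \<in> tedges V r par. reachable_avoiding S (verts X) (fst e)}"
proof
  fix e assume "e \<in> flow V r par S X"
  then obtain vs where dp: "dpath (tedges V r par) vs" and hd: "hd vs \<in> S"
    and interior: "\<forall>i. 0 < i \<and> Suc i < length vs \<longrightarrow> vs ! i \<notin> verts X"
    and e: "e \<in> path_edges vs"
    unfolding flow_def by blast
  then obtain i where i: "Suc i < length vs" "e = (vs ! i, vs ! Suc i)"
    by (auto simp: path_edges_def)
  have edge: "\<And>j. Suc j < length vs \<Longrightarrow> (vs ! j, vs ! Suc j) \<in> tedges V r par"
    using dp by (auto simp: dpath_def)
  have "reachable_avoiding S (verts X) (vs ! j)" if "j \<le> i" for j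
    using that
  proof (induction j)
    case 0
    then show ?case using hd dp by (auto simp: dpath_def hd_conv_nth intro: source)
  next
    case (Suc j)
    have "vs ! Suc j = par (vs ! j)" "vs ! j \<in> V" "vs ! j \<noteq> r"
      using edge[of j] Suc.prems i by (auto simp: tedges_iff)
    moreover have "vs ! Suc j \<notin> verts X" using interior Suc.prems i(1) by auto
    ultimately show ?case using Suc climb[of S "verts X" "vs ! j"] by auto
  qed
  then show "e \<in> {e \<in> tedges V r par. reachable_avoiding S (verts X) (fst e)}"
    using edge i by auto
qed

text \<open>A ray cannot climb forever, since it would reach the root; and once it steps down it can
  never step up again, as that would revisit a vertex.\<close>

lemma ray_eventually_descends:
  assumes X: "X \<subseteq> tedges V r par" and inj: "inj f"
    and ray: "\<And>i. (f i, f (Suc i)) \<in> X \<or> (f (Suc i), f i) \<in> X"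
  obtains k where "\<And>j. k \<le> j \<Longrightarrow> (f (Suc j), f j) \<in> X"
proof -
  have ascend: "f (Suc i) = par (f i) \<and> f i \<in> V \<and> f i \<noteq> r" if "(f (Suc i), f i) \<notin> X" for i
  proof -
    have "(f i, f (Suc i)) \<in> tedges V r par" using ray[of i] that X by blast
    then show ?thesis by (simp add: tedges_iff)
  qed
  have descend: "f i = par (f (Suc i))" if "(f (Suc i), f i) \<in> X" for i
  proof -
    have "(f (Suc i), f i) \<in> tedges V r par" using that X by blast
    then show ?thesis by (simp add: tedges_iff)
  qed
  have "\<exists>k. (f (Suc k), f k) \<in> X"
  proof (rule ccontr)
    assume "\<not> ?thesis"
    then have up: "\<And>i. f (Suc i) = par (f i) \<and> f i \<in> V \<and> f i \<noteq> r" using ascend by blast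
    have iterate: "f n = (par ^^ n) (f 0)" for n
      by (induction n) (use up in auto)
    obtain n where "(par ^^ n) (f 0) = r" using reaches_root up[of 0] by blast
    then have "f n = r" using iterate[of n] by simp
    with up[of n] show False by simp
  qed
  then obtain k where k: "(f (Suc k), f k) \<in> X" by blast
  have "(f (Suc j), f j) \<in> X" if "k \<le> j" for j
    using that
  proof (induction j rule: dec_induct)
    case base
    show ?case by (rule k)
  next
    case (step j)
    show ?case
    proof (rule ccontr)
      assume "(f (Suc (Suc j)), f (Suc j)) \<notin> X"
      then have "f (Suc (Suc j)) = par (f (Suc j))" using ascend by blast
      with descend[OF step.IH] have "f (Suc (Suc j)) = f j" by simp
      then have "Suc (Suc j) = j" by (rule injD[OF inj])
      then show False by simp
    qed
  qed
  then show thesis by (rule that)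
qed

fun win_stage :: "'a set \<Rightarrow> 'a set \<Rightarrow> nat \<Rightarrow> 'a set" where
  "win_stage S Q 0 = {}"
| "win_stage S Q (Suc n) =
    S \<union> {v \<in> V. card (children v \<inter> Q) < card (children v \<inter> win_stage S Q n)}"

definition win :: "'a set \<Rightarrow> 'a set \<Rightarrow> 'a set" where
  "win S Q = (\<Union>n. win_stage S Q n)"

definition win_rank :: "'a set \<Rightarrow> 'a set \<Rightarrow> 'a \<Rightarrow> nat" where
  "win_rank S Q v = (LEAST n. v \<in> win_stage S Q n)"

lemma card_children_mono:
  assumes "v \<in> V" "A \<subseteq> A'"
  shows "card (children v \<inter> A) \<le> card (children v \<inter> A')"
  using finite_children[OF assms(1)] assms(2) by (intro card_mono) auto

lemma win_stage_Suc: "win_stage S Q n \<subseteq> win_stage S Q (Suc n)"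
proof (induction n)
  case (Suc n)
  show ?case
  proof
    fix v assume "v \<in> win_stage S Q (Suc n)"
    then show "v \<in> win_stage S Q (Suc (Suc n))" using card_children_mono[OF _ Suc.IH, of v] by auto
  qed
qed simp

lemma win_stage_mono: "m \<le> n \<Longrightarrow> win_stage S Q m \<subseteq> win_stage S Q n"
  using lift_Suc_mono_le[of "win_stage S Q", OF win_stage_Suc] by blast

lemma win_stage_antimono: "Q \<subseteq> Q' \<Longrightarrow> win_stage S Q' n \<subseteq> win_stage S Q n"
proof (induction n)
  case (Suc n)
  show ?case
  proof
    fix v assume v: "v \<in> win_stage S Q' (Suc n)"
    show "v \<in> win_stage S Q (Suc n)"
    proof (cases "v \<in> S")
      case False
      then have "v \<in> V" and "card (children v \<inter> Q') < card (children v \<inter> win_stage S Q' n)"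
        using v by auto
      moreover note card_children_mono[OF \<open>v \<in> V\<close> Suc.prems]
        card_children_mono[OF \<open>v \<in> V\<close> Suc.IH[OF Suc.prems]]
      ultimately show ?thesis by auto
    qed simp
  qed
qed simp

lemma win_antimono: "Q \<subseteq> Q' \<Longrightarrow> win S Q' \<subseteq> win S Q"
  unfolding win_def using win_stage_antimono[of Q Q' S] by blast

lemma finite_subset_win_stage:
  "finite A \<Longrightarrow> A \<subseteq> win S Q \<Longrightarrow> \<exists>m. A \<subseteq> win_stage S Q m"
proof (induction A rule: finite_induct)
  case (insert x A)
  then obtain m k where "A \<subseteq> win_stage S Q m" "x \<in> win_stage S Q k"
    by (auto simp: win_def)
  moreover have "win_stage S Q m \<subseteq> win_stage S Q (max k m)" "win_stage S Q k \<subseteq> win_stage S Q (max k m)"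
    by (simp_all add: win_stage_mono)
  ultimately show ?case by blast
qed simp

text \<open>Local finiteness makes the \<omega>-th round a fixed point.\<close>

lemma win_iff:
  "v \<in> win S Q \<longleftrightarrow> v \<in> S \<or> v \<in> V \<and> card (children v \<inter> Q) < card (children v \<inter> win S Q)"
proof
  assume "v \<in> win S Q"
  then obtain n where "v \<in> win_stage S Q n" by (auto simp: win_def)
  then obtain m where "v \<in> win_stage S Q (Suc m)" by (cases n) auto
  moreover have "win_stage S Q m \<subseteq> win S Q" by (auto simp: win_def)
  ultimately show "v \<in> S \<or> v \<in> V \<and> card (children v \<inter> Q) < card (children v \<inter> win S Q)"
    using card_children_mono[of v "win_stage S Q m" "win S Q"] by auto
next
  assume v: "v \<in> S \<or> v \<in> V \<and> card (children v \<inter> Q) < card (children v \<inter> win S Q)"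
  show "v \<in> win S Q"
  proof (cases "v \<in> S")
    case True
    then have "v \<in> win_stage S Q (Suc 0)" by simp
    then show ?thesis unfolding win_def by blast
  next
    case False
    with v have "v \<in> V" by blast
    then obtain m where m: "children v \<inter> win S Q \<subseteq> win_stage S Q m"
      using finite_subset_win_stage[of "children v \<inter> win S Q"] finite_children by blast
    have "win_stage S Q m \<subseteq> win S Q" by (auto simp: win_def)
    with m have "children v \<inter> win S Q = children v \<inter> win_stage S Q m" by blast
    with v False \<open>v \<in> V\<close> have "v \<in> win_stage S Q (Suc m)" by auto
    then show ?thesis unfolding win_def by blast
  qed
qed

lemma win_rank_children:
  assumes "v \<in> win S Q" "v \<notin> S"
  shows "card (children v \<inter> Q)
    < card {c \<in> children v. c \<in> win S Q \<and> win_rank S Q c < win_rank S Q v}"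
proof -
  have "v \<in> win_stage S Q (win_rank S Q v)"
    unfolding win_rank_def using assms(1) by (auto simp: win_def intro: LeastI)
  then obtain m where m: "win_rank S Q v = Suc m"
    and "v \<in> win_stage S Q (Suc m)" by (cases "win_rank S Q v") auto
  with assms have "v \<in> V" and lt: "card (children v \<inter> Q) < card (children v \<inter> win_stage S Q m)"
    by auto
  have "children v \<inter> win_stage S Q m
      \<subseteq> {c \<in> children v. c \<in> win S Q \<and> win_rank S Q c < win_rank S Q v}"
    using m by (auto simp: win_def win_rank_def less_Suc_eq_le intro: Least_le)
  then have "card (children v \<inter> win_stage S Q m)
      \<le> card {c \<in> children v. c \<in> win S Q \<and> win_rank S Q c < win_rank S Q v}"
    by (intro card_mono) (auto simp: finite_children \<open>v \<in> V\<close>)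
  with lt show ?thesis by linarith
qed

lemma win_disjoint:
  assumes "S \<subseteq> leaves V r par" "T \<subseteq> leaves V r par" "S \<inter> T = {}"
    and "P = win S N" "N = win T P"
  shows "P \<inter> N = {}"
proof (rule ccontr)
  assume "P \<inter> N \<noteq> {}"
  then obtain v where "v \<in> P" "v \<in> N" by blast
  then have "v \<in> S \<or> card (children v \<inter> N) < card (children v \<inter> P)"
    and "v \<in> T \<or> card (children v \<inter> P) < card (children v \<inter> N)"
    using win_iff[of v S N, folded assms(4)] win_iff[of v T P, folded assms(5)] by blast+
  moreover have "v \<in> S \<union> T \<Longrightarrow> children v = {}" using assms(1,2) children_leaf by blast
  ultimately show False using assms(3) by auto
qed

end

locale winning_sets = locally_finite_rooted_tree +
  fixes S T P N :: "'a set" and rank :: "'a \<Rightarrow> nat"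
  assumes S_leaves: "S \<subseteq> leaves V r par"
    and T_subset_N: "T \<subseteq> N"
    and disjoint: "P \<inter> N = {}"
    and outnumbers: "\<And>v. v \<in> P \<Longrightarrow> v \<notin> S
      \<Longrightarrow> card (children v \<inter> N) < card {c \<in> children v. c \<in> P \<and> rank c < rank v}"
    and ties: "\<And>v. v \<in> V \<Longrightarrow> v \<notin> P \<Longrightarrow> v \<notin> N
      \<Longrightarrow> card (children v \<inter> P) = card (children v \<inter> N)"
    and root_notin_N: "r \<notin> N"
begin

definition cut :: "('a \<times> 'a) set" where
  "cut = {e \<in> tedges V r par.
     fst e \<in> P \<and> snd e \<notin> N \<and> (snd e \<in> P \<longrightarrow> rank (fst e) < rank (snd e))}"

lemma cut_subset: "cut \<subseteq> tedges V r par"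
  by (auto simp: cut_def)

lemma in_cut_iff:
  "(c, v) \<in> cut \<longleftrightarrow> c \<in> children v \<and> c \<in> P \<and> v \<notin> N \<and> (v \<in> P \<longrightarrow> rank c < rank v)"
  by (auto simp: cut_def children_def)

lemma verts_cut_disjoint_N: "verts cut \<inter> N = {}"
  using disjoint by (auto simp: verts_def cut_def)

lemma cut_rayless: "rayless cut"
  unfolding rayless_def
proof
  assume "\<exists>f :: nat \<Rightarrow> 'a. inj f \<and> (\<forall>i. (f i, f (Suc i)) \<in> cut \<or> (f (Suc i), f i) \<in> cut)"
  then obtain f :: "nat \<Rightarrow> 'a"
    where "inj f" "\<And>i. (f i, f (Suc i)) \<in> cut \<or> (f (Suc i), f i) \<in> cut"
    by blast
  then obtain k where down: "\<And>j. k \<le> j \<Longrightarrow> (f (Suc j), f j) \<in> cut"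
    using ray_eventually_descends[OF cut_subset] by blast
  have "rank (f (Suc (Suc j))) < rank (f (Suc j))" if "k \<le> j" for j
    using down[of j] down[of "Suc j"] that by (simp add: in_cut_iff)
  moreover obtain i where "(rank (f (Suc (k + Suc i))), rank (f (Suc (k + i)))) \<notin> less_than"
    using wf_no_infinite_down_chainE[OF wf_less_than, of "\<lambda>i. rank (f (Suc (k + i)))"] by blast
  ultimately show False by simp
qed

text \<open>The children of v in P outnumber or tie with those in N, so some child in P qualifies.\<close>

lemma parent_of_N_in_verts_cut:
  assumes "c \<in> N" "c \<in> children v" "v \<notin> N"
  shows "v \<in> verts cut"
proof -
  have "v \<in> V" using assms(2) par_in_V by (auto simp: children_iff)
  have pos: "0 < card (children v \<inter> N)"
    using assms finite_children[OF \<open>v \<in> V\<close>] by (auto simp: card_gt_0_iff)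
  obtain c' where "(c', v) \<in> cut"
  proof (cases "v \<in> P")
    case True
    have "v \<notin> S" using S_leaves assms(2) children_leaf by blast
    have "{c \<in> children v. c \<in> P \<and> rank c < rank v} \<noteq> {}"
      using outnumbers[OF True \<open>v \<notin> S\<close>] pos by (metis card.empty not_less0)
    then obtain c' where "c' \<in> children v" "c' \<in> P" "rank c' < rank v" by blast
    then show ?thesis using that assms(3) by (auto simp: in_cut_iff)
  next
    case False
    have "children v \<inter> P \<noteq> {}"
      using ties[OF \<open>v \<in> V\<close> False assms(3)] pos by (metis card.empty less_irrefl)
    then obtain c' where "c' \<in> children v" "c' \<in> P" by blast
    then show ?thesis using that assms(3) False by (auto simp: in_cut_iff)
  qed
  then show ?thesis unfolding verts_def by (metis UnI2 image_eqI snd_conv)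
qed

lemma reachable_avoiding_cut_in_N:
  "reachable_avoiding T (verts cut) d \<Longrightarrow> d \<in> children v \<Longrightarrow> v \<notin> N \<Longrightarrow> d \<in> N"
proof (induction arbitrary: v rule: reachable_avoiding.induct)
  case (source d)
  then show ?case using T_subset_N by blast
next
  case (climb e)
  show ?case
  proof (rule ccontr)
    assume "par e \<notin> N"
    moreover have "e \<in> children (par e)" using climb.hyps by (simp add: children_iff)
    ultimately have "e \<in> N" using climb.IH by blast
    then have "par e \<in> verts cut"
      using parent_of_N_in_verts_cut \<open>e \<in> children (par e)\<close> \<open>par e \<notin> N\<close> by blast
    then show False using climb.hyps by blast
  qed
qed

lemma flow_into_complement_from_N:
  assumes "(d, v) \<in> flow V r par T cut" "v \<notin> N"
  shows "d \<in> children v \<inter> N"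
proof -
  have "(d, v) \<in> tedges V r par \<and> reachable_avoiding T (verts cut) d"
    using subsetD[OF flow_subset_reachable assms(1)] by simp
  then show ?thesis using reachable_avoiding_cut_in_N assms(2) by (auto simp: children_def)
qed

lemma accum2_cut_flow:
  assumes "v \<in> V" "v \<notin> N" "v \<notin> S"
  shows "accum2 v cut (flow V r par T cut) \<ge> (if v = r \<and> v \<in> P then 1 else 0)"
proof -
  define A where "A = {c \<in> children v. c \<in> P \<and> (v \<in> P \<longrightarrow> rank c < rank v)}"
  have "{c. (c, v) \<in> cut} = A" using assms(2) by (auto simp: A_def in_cut_iff)
  then have cut_in: "card {e \<in> cut. snd e = v} = card A" by (simp add: card_in_edges)
  have "card {e \<in> cut. fst e = v} \<le> 1" using card_out_edges_le_1[OF cut_subset] .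
  moreover have "card {e \<in> cut. fst e = v} = 0" if "v \<notin> P \<or> v = r"
  proof -
    have "{e \<in> cut. fst e = v} = {}" using that by (auto simp: cut_def tedges_iff)
    then show ?thesis by (simp only: card.empty)
  qed
  ultimately have cut_out: "card {e \<in> cut. fst e = v} \<le> (if v \<in> P \<and> v \<noteq> r then 1 else 0)"
    by auto
  have "{c. (c, v) \<in> flow V r par T cut} \<subseteq> children v \<inter> N"
    using flow_into_complement_from_N assms(2) by blast
  then have flow_in: "card {e \<in> flow V r par T cut. snd e = v} \<le> card (children v \<inter> N)"
    unfolding card_in_edges using finite_children[OF assms(1)] by (intro card_mono) auto
  have "accum2 v cut (flow V r par T cut)
      \<ge> int (card A) - int (card {e \<in> cut. fst e = v}) - int (card (children v \<inter> N))"
    using cut_in flow_in unfolding accum2_def accum_def by linarith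
  moreover have "card (children v \<inter> N) < card A" if "v \<in> P"
    using outnumbers[OF that assms(3)] that by (simp add: A_def)
  moreover have "card (children v \<inter> N) = card A" if "v \<notin> P"
    using ties[OF assms(1) that assms(2)] that by (simp add: A_def Int_def)
  ultimately show ?thesis using cut_out by (cases "v \<in> P"; cases "v = r"; simp; linarith)
qed

lemma cut_blue_blockage: "blue_blockage V r par S T cut"
  unfolding blue_blockage_def
proof (intro conjI ballI cut_subset cut_rayless)
  show "verts cut \<inter> T = {}" using verts_cut_disjoint_N T_subset_N by blast
  fix v assume v: "v \<in> verts cut \<union> {r} - S"
  then have "v \<in> V" "v \<notin> N"
    using verts_subset_V[OF cut_subset] root_in_V verts_cut_disjoint_N root_notin_N by auto
  have "0 \<le> (if v = r \<and> v \<in> P then 1 else 0 :: int)" by simp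
  also have "\<dots> \<le> accum2 v cut (flow V r par T cut)"
    using accum2_cut_flow \<open>v \<in> V\<close> \<open>v \<notin> N\<close> v by blast
  finally show "accum2 v cut (flow V r par T cut) \<ge> 0" .
qed

lemma cut_strong_blue_blockage:
  assumes "r \<in> P" "r \<notin> S"
  shows "strong_blue_blockage V r par S T cut"
  using cut_blue_blockage accum2_cut_flow[OF root_in_V root_notin_N assms(2)] assms(1)
  by (simp add: strong_blue_blockage_def)

lemma cut_red_blockage: "red_blockage V r par T S cut"
  using cut_blue_blockage by (simp add: blue_blockage_def red_blockage_def)

end

context locally_finite_rooted_tree
begin

lemma winning_sets_of_win:
  assumes "S \<subseteq> leaves V r par" "T \<subseteq> leaves V r par" "S \<inter> T = {}"
    and P: "P = win S N" and N: "N = win T P" and "r \<notin> N"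
  shows "winning_sets V r par S T P N (win_rank S N)"
proof (intro winning_sets.intro locally_finite_rooted_tree_axioms winning_sets_axioms.intro)
  show "S \<subseteq> leaves V r par" "r \<notin> N" by fact+
  show "T \<subseteq> N" using N win_iff by blast
  show "P \<inter> N = {}" using win_disjoint[OF assms(1-5)] .
  show "card (children v \<inter> N) < card {c \<in> children v. c \<in> P \<and> win_rank S N c < win_rank S N v}"
    if "v \<in> P" "v \<notin> S" for v
    using win_rank_children[of v S N] that P by simp
  show "card (children v \<inter> P) = card (children v \<inter> N)" if "v \<in> V" "v \<notin> P" "v \<notin> N" for v
  proof -
    have "\<not> card (children v \<inter> N) < card (children v \<inter> P)"
      using that win_iff[of v S N, folded P] by blast
    moreover have "\<not> card (children v \<inter> P) < card (children v \<inter> N)"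
      using that win_iff[of v T P, folded N] by blast
    ultimately show ?thesis by linarith
  qed
qed

lemma mutual_win_fixpoint:
  obtains P N where "P = win S N" "N = win T P"
proof -
  let ?F = "\<lambda>Q. win T (win S Q)"
  have "mono ?F" by (auto intro!: monoI win_antimono)
  then have "lfp ?F = ?F (lfp ?F)" by (rule lfp_unfold)
  then show thesis using that[of "win S (lfp ?F)" "lfp ?F"] by simp
qed

lemma red_blockage_empty:
  assumes "r \<in> leaves V r par"
  shows "red_blockage V r par B R {}"
proof -
  have "flow V r par B {} \<subseteq> tedges V r par" using flow_subset_reachable by blast
  then have "{e \<in> flow V r par B {}. snd e = r} = {}" "{e \<in> flow V r par B {}. fst e = r} = {}"
    using children_leaf[OF assms] by (auto simp: children_def tedges_def)
  then have "accum2 r {} (flow V r par B {}) = 0"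
    unfolding accum2_def accum_def by (simp only: card.empty) simp
  then show ?thesis by (auto simp: red_blockage_def rayless_def verts_def)
qed

end

theorem theorem1p1:
  fixes V :: "'a set" and r :: 'a and par :: "'a \<Rightarrow> 'a" and B R :: "'a set"
  assumes "rooted_tree V r par"
    and "locally_finite_tree V r par"
    and "B \<subseteq> leaves V r par" and "R \<subseteq> leaves V r par"
    and "B \<inter> R = {}"
  shows "(\<exists>X. strong_blue_blockage V r par B R X) \<or> (\<exists>X. red_blockage V r par B R X)"
proof -
  interpret locally_finite_rooted_tree V r par using assms(1,2) by unfold_locales
  show ?thesis
  proof (cases "r \<in> leaves V r par")
    case True
    then show ?thesis using red_blockage_empty by blast
  next
    case False
    then have "r \<notin> B" using assms(3) by blast
    obtain P N where P: "P = win B N" and N: "N = win R P" by (rule mutual_win_fixpoint)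
    show ?thesis
    proof (cases "r \<in> P")
      case True
      then have "r \<notin> N" using win_disjoint[OF assms(3-5) P N] by blast
      interpret blue: winning_sets V r par B R P N "win_rank B N"
        by (rule winning_sets_of_win[OF assms(3-5) P N \<open>r \<notin> N\<close>])
      show ?thesis using blue.cut_strong_blue_blockage[OF True \<open>r \<notin> B\<close>] by blast
    next
      case False
      have "R \<inter> B = {}" using assms(5) by blast
      interpret red: winning_sets V r par R B N P "win_rank R P"
        by (rule winning_sets_of_win[OF assms(4,3) \<open>R \<inter> B = {}\<close> N P False])
      show ?thesis using red.cut_red_blockage by blast
    qed
  qed
qed

end
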